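(* There is no automorphism $\varphi$ of $E$ of type 4 such that, for some basis $\{e_n\}_{n\in\mathbb{N}}$ of $L$, $\varphi(e_n)=-e_n+b_n$ for every $n\in\mathbb{N}$, where each $b_n$ is a nonzero scalar multiple of a monomial $e_{i_1}\cdots e_{i_m}$ in the generators.
   Context: $F$ is a field of characteristic zero, $L$ an infinite-dimensional $F$-vector space, $E$ its Grassmann algebra; for a basis $\{e_n\}$ of $L$, $E$ has basis $1$ and the monomials $e_{i_1}\cdots e_{i_m}$, $i_1<\cdots<i_m$, with $e_ie_j=-e_je_i$. An automorphism $\varphi$ of $E$ with $\varphi^2=\mathrm{id}$ is of type 4 if for every basis $\gamma$ of $L$ the set $\{n\mid \varphi(\gamma_n)=\pm\gamma_n\}$ is empty, i.e. no element $v$ of any basis $\gamma$ of $L$ satisfies $\varphi(v)=v$ or $\varphi(v)=-v$. *)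

theory Defs
  imports Main "HOL-Library.Function_Algebras"
begin

text \<open>Concrete model of the Grassmann algebra E of a vector space L with a
countable basis: elements of E are finitely supported coefficient functions
on finite subsets of nat (the standard monomials eps_{i1}...eps_{im}, i1<...<im).\<close>

type_synonym 'a grass = "nat set \<Rightarrow> 'a"

definition Grass :: "'a::field grass set" where
  "Grass = {x. finite {U. x U \<noteq> 0} \<and> (\<forall>U. x U \<noteq> 0 \<longrightarrow> finite U)}"

definition Lspace :: "'a::field grass set" where
  "Lspace = {x \<in> Grass. \<forall>U. x U \<noteq> 0 \<longrightarrow> card U = 1}"

definition gsmult :: "'a::field \<Rightarrow> 'a grass \<Rightarrow> 'a grass" where
  "gsmult c x = (\<lambda>U. c * x U)"

text \<open>sign of eps_S * eps_T for disjoint S, T\<close>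
definition gsign :: "nat set \<Rightarrow> nat set \<Rightarrow> 'a::field" where
  "gsign S T = (-1) ^ card {(s, t). s \<in> S \<and> t \<in> T \<and> t < s}"

definition gmult :: "'a::field grass \<Rightarrow> 'a grass \<Rightarrow> 'a grass" where
  "gmult x y = (\<lambda>U. if finite U then (\<Sum>S\<in>Pow U. gsign S (U - S) * x S * y (U - S)) else 0)"

definition gone :: "'a::field grass" where
  "gone = (\<lambda>U. if U = {} then 1 else 0)"

definition gspan :: "'a::field grass set \<Rightarrow> 'a grass set" where
  "gspan B = {(\<Sum>a\<in>t. gsmult (r a) a) | t r. finite t \<and> t \<subseteq> B}"

definition gindependent :: "'a::field grass set \<Rightarrow> bool" where
  "gindependent S \<longleftrightarrow> (\<forall>t u v. finite t \<longrightarrow> t \<subseteq> S \<longrightarrow>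
      (\<Sum>w\<in>t. gsmult (u w) w) = 0 \<longrightarrow> v \<in> t \<longrightarrow> u v = 0)"

definition is_basis_L :: "'a::field grass set \<Rightarrow> bool" where
  "is_basis_L B \<longleftrightarrow> B \<subseteq> Lspace \<and> gindependent B \<and> gspan B = Lspace"

definition is_basis_seq_L :: "(nat \<Rightarrow> 'a::field grass) \<Rightarrow> bool" where
  "is_basis_seq_L e \<longleftrightarrow> inj e \<and> is_basis_L (range e)"

definition grass_aut :: "('a::field grass \<Rightarrow> 'a grass) \<Rightarrow> bool" where
  "grass_aut \<phi> \<longleftrightarrow> bij_betw \<phi> Grass Grass
     \<and> (\<forall>x\<in>Grass. \<forall>y\<in>Grass. \<phi> (x + y) = \<phi> x + \<phi> y)
     \<and> (\<forall>c. \<forall>x\<in>Grass. \<phi> (gsmult c x) = gsmult c (\<phi> x))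
     \<and> (\<forall>x\<in>Grass. \<forall>y\<in>Grass. \<phi> (gmult x y) = gmult (\<phi> x) (\<phi> y))
     \<and> \<phi> gone = gone"

definition involutive_on_E :: "('a::field grass \<Rightarrow> 'a grass) \<Rightarrow> bool" where
  "involutive_on_E \<phi> \<longleftrightarrow> (\<forall>x\<in>Grass. \<phi> (\<phi> x) = x)"

definition type4 :: "('a::field grass \<Rightarrow> 'a grass) \<Rightarrow> bool" where
  "type4 \<phi> \<longleftrightarrow> (\<forall>B. is_basis_L B \<longrightarrow> (\<forall>v\<in>B. \<phi> v \<noteq> v \<and> \<phi> v \<noteq> - v))"

definition monomial_in :: "(nat \<Rightarrow> 'a::field grass) \<Rightarrow> 'a grass \<Rightarrow> bool" where
  "monomial_in e b \<longleftrightarrow> (\<exists>is. is \<noteq> [] \<and> sorted_wrt (<) is \<and> b = foldr gmult (map e is) gone)"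

end

theory Submission
  imports Defs
begin

text \<open>
  Write \<open>\<phi>(e\<^sub>n) = -e\<^sub>n + c\<^sub>n M\<^sub>n\<close> with \<open>M\<^sub>n\<close> a monomial in the basis. Applying \<open>\<phi>\<close>
  twice gives \<open>\<phi>(M\<^sub>n) = M\<^sub>n\<close>, and type 4 excludes monomials of length 1. Expanding
  \<open>\<phi>(M\<^sub>n)\<close> as the product of the \<open>-e\<^sub>i + c\<^sub>i M\<^sub>i\<close> gives
  \<open>\<phi>(M\<^sub>n) = (-1)\<^sup>l M\<^sub>n + (higher degree)\<close> for \<open>M\<^sub>n\<close> of length \<open>l\<close>, so \<open>l\<close> is even.
  Even monomials commute with degree-one elements, so the part of
  \<open>\<phi>(e\<^sub>n e\<^sub>m + e\<^sub>m e\<^sub>n) = 0\<close> that is linear in the perturbations reads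
  \<open>c\<^sub>m e\<^sub>n M\<^sub>m + c\<^sub>n e\<^sub>m M\<^sub>n = 0\<close>; it is separated from the quadratic part by degree.

  A contraction argument, which uses the linear independence of the basis, shows that
  \<open>e\<^sub>k M\<^sub>n = 0\<close> exactly when \<open>e\<^sub>k\<close> is a factor of \<open>M\<^sub>n\<close>. So being a factor is a
  symmetric relation between indices, and multiplying the relation for \<open>(n, m)\<close> by a factor
  \<open>e\<^sub>k\<close>, \<open>k \<noteq> n\<close>, of \<open>M\<^sub>n\<close> shows that every \<open>e\<^sub>m\<close>, \<open>m \<noteq> n\<close>, that is not a factor of
  \<open>M\<^sub>n\<close> is a factor of \<open>M\<^sub>k\<close>: the monomial \<open>M\<^sub>k\<close> would have infinitely many factors.
\<close>

subsection \<open>Closure and bilinearity\<close>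

lemma sum_fun_apply: "(\<Sum>a\<in>A. g a) U = (\<Sum>a\<in>A. g a U)"
  by (induction A rule: infinite_finite_induct) auto

lemma gsmult_apply: "gsmult c x U = c * x U"
  by (simp add: gsmult_def)

lemma gsmult_zero_left: "gsmult 0 x = 0"
  by (simp add: gsmult_def zero_fun_def)

lemma gsmult_one: "gsmult 1 x = x"
  by (simp add: gsmult_def)

lemma gsmult_zero_right: "gsmult c 0 = 0"
  by (simp add: gsmult_def zero_fun_def)

lemma gsmult_eq_0_iff: "gsmult c x = 0 \<longleftrightarrow> c = 0 \<or> x = 0"
  by (auto simp: gsmult_def fun_eq_iff)

lemma gsmult_add_eq_0_zero_iff:
  assumes "gsmult c x + gsmult d y = 0" "c \<noteq> 0" "d \<noteq> 0"
  shows "x = 0 \<longleftrightarrow> y = 0"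
proof -
  have "c * x U + d * y U = 0" for U
    using fun_cong[OF assms(1), of U] by (simp add: gsmult_def)
  then show ?thesis
    using assms(2,3) by (auto simp: fun_eq_iff)
qed

lemma Grass_finite_support: "x \<in> Grass \<Longrightarrow> x U \<noteq> 0 \<Longrightarrow> finite U"
  by (simp add: Grass_def)

lemma Lspace_singleton: "v \<in> Lspace \<Longrightarrow> v S \<noteq> 0 \<Longrightarrow> \<exists>x. S = {x}"
  by (auto simp: Lspace_def card_1_singleton_iff)

lemma Lspace_subset_Grass: "Lspace \<subseteq> Grass"
  by (auto simp: Lspace_def)

lemma Grass_uminus: "x \<in> Grass \<Longrightarrow> - x \<in> Grass"
  by (simp add: Grass_def)

lemma Grass_gsmult:
  assumes "x \<in> Grass"
  shows "gsmult c x \<in> Grass"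
proof -
  have "{U. gsmult c x U \<noteq> 0} \<subseteq> {U. x U \<noteq> 0}"
    by (auto simp: gsmult_def)
  then show ?thesis
    using assms unfolding Grass_def by (auto intro: finite_subset simp: gsmult_def)
qed

lemma gone_in_Grass: "gone \<in> Grass"
proof -
  have "{U. gone U \<noteq> (0::'a)} = {{}}"
    by (auto simp: gone_def)
  then show ?thesis
    by (auto simp: Grass_def gone_def)
qed

lemma gmult_nonzero_split:
  assumes "gmult x y U \<noteq> 0"
  shows "finite U \<and> (\<exists>S\<subseteq>U. x S \<noteq> 0 \<and> y (U - S) \<noteq> 0)"
proof -
  have fin: "finite U"
    using assms by (auto simp: gmult_def split: if_splits)
  then have "(\<Sum>S\<in>Pow U. gsign S (U - S) * x S * y (U - S)) \<noteq> 0"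
    using assms by (simp add: gmult_def)
  then obtain S where "S \<in> Pow U" "gsign S (U - S) * x S * y (U - S) \<noteq> 0"
    by (meson sum.not_neutral_contains_not_neutral)
  then show ?thesis
    using fin by auto
qed

lemma Grass_gmult:
  assumes x: "x \<in> Grass" and y: "y \<in> Grass"
  shows "gmult x y \<in> Grass"
proof -
  let ?P = "(\<lambda>(S, T). S \<union> T) ` ({U. x U \<noteq> 0} \<times> {U. y U \<noteq> 0})"
  have "{U. gmult x y U \<noteq> 0} \<subseteq> ?P"
  proof
    fix U
    assume "U \<in> {U. gmult x y U \<noteq> 0}"
    then obtain S where "S \<subseteq> U" "x S \<noteq> 0" "y (U - S) \<noteq> 0"
      using gmult_nonzero_split by blast
    then show "U \<in> ?P"
      by (intro image_eqI[of _ _ "(S, U - S)"]) auto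
  qed
  moreover have "finite ?P"
    using x y by (auto simp: Grass_def)
  ultimately show ?thesis
    using gmult_nonzero_split[of x y] by (auto simp: Grass_def intro: finite_subset)
qed

lemma gmult_add_left: "gmult (x + y) z = gmult x z + gmult y z"
  by (auto simp: gmult_def fun_eq_iff sum.distrib[symmetric] algebra_simps)

lemma gmult_add_right: "gmult x (y + z) = gmult x y + gmult x z"
  by (auto simp: gmult_def fun_eq_iff sum.distrib[symmetric] algebra_simps)

lemma gmult_uminus_left: "gmult (- x) z = - gmult x z"
  by (auto simp: gmult_def fun_eq_iff sum_negf[symmetric])

lemma gmult_uminus_right: "gmult x (- z) = - gmult x z"
  by (auto simp: gmult_def fun_eq_iff sum_negf[symmetric])

lemma gmult_gsmult_left: "gmult (gsmult c x) z = gsmult c (gmult x z)"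
  by (auto simp: gmult_def gsmult_def fun_eq_iff sum_distrib_left algebra_simps)

lemma gmult_gsmult_right: "gmult x (gsmult c z) = gsmult c (gmult x z)"
  by (auto simp: gmult_def gsmult_def fun_eq_iff sum_distrib_left algebra_simps)

lemma gmult_zero_right: "gmult x 0 = 0"
  by (auto simp: gmult_def fun_eq_iff)

lemma gmult_gone_right:
  assumes "x \<in> Grass"
  shows "gmult x gone = x"
proof
  fix U
  show "gmult x gone U = x U"
  proof (cases "finite U")
    case True
    have "gmult x gone U = (\<Sum>S\<in>Pow U. gsign S (U - S) * x S * gone (U - S))"
      using True by (simp add: gmult_def)
    also have "\<dots> = (\<Sum>S\<in>{U}. gsign S (U - S) * x S * gone (U - S))"
      by (rule sum.mono_neutral_right) (use True in \<open>auto simp: gone_def\<close>)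
    also have "\<dots> = x U"
      by (simp add: gsign_def gone_def)
    finally show ?thesis .
  next
    case False
    then show ?thesis
      using assms by (auto simp: gmult_def Grass_def)
  qed
qed

subsection \<open>Degree-one elements, grading and anticommutation\<close>

text \<open>For \<open>u \<notin> U\<close>, \<open>\<epsilon>\<^sub>u \<epsilon>\<^sub>U = insert_sign u U \<epsilon>\<^bsub>insert u U\<^esub>\<close>.\<close>

definition insert_sign :: "nat \<Rightarrow> nat set \<Rightarrow> 'a::field" where
  "insert_sign u U = (-1) ^ card {t\<in>U. t < u}"

lemma insert_sign_square: "insert_sign u U * insert_sign u U = (1::'a::field)"
  by (simp add: insert_sign_def power_mult_distrib[symmetric])

lemma insert_sign_insert:
  assumes "finite W" "t \<notin> W"
  shows "insert_sign u (insert t W) = (if t < u then -1 else 1) * (insert_sign u W :: 'a::field)"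
proof (cases "t < u")
  case True
  then have "{x\<in>insert t W. x < u} = insert t {x\<in>W. x < u}"
    by auto
  then show ?thesis
    using True assms by (simp add: insert_sign_def)
next
  case False
  then have "{x\<in>insert t W. x < u} = {x\<in>W. x < u}"
    by auto
  then show ?thesis
    using False by (simp add: insert_sign_def)
qed

lemma gsign_singleton_left:
  assumes "finite T"
  shows "gsign {u} T = insert_sign u T"
proof -
  have "{(s, t). s \<in> {u} \<and> t \<in> T \<and> t < s} = Pair u ` {t\<in>T. t < u}"
    by auto
  then show ?thesis
    by (simp add: gsign_def insert_sign_def card_image inj_on_def)
qed

lemma gsign_singleton_right:
  assumes "finite W" "u \<notin> W"
  shows "gsign W {u} = (-1) ^ card W * (insert_sign u W :: 'a::field)"
proof -
  have "{(s, t). s \<in> W \<and> t \<in> {u} \<and> t < s} = (\<lambda>s. (s, u)) ` {s\<in>W. u < s}"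
    by auto
  then have gsign: "gsign W {u} = ((-1) ^ card {s\<in>W. u < s} :: 'a)"
    by (simp add: gsign_def card_image inj_on_def)
  have W: "W = {t\<in>W. t < u} \<union> {t\<in>W. u < t}"
    using assms(2) by auto (metis linorder_neqE_nat)
  have "card W = card {t\<in>W. t < u} + card {t\<in>W. u < t}"
    using assms(1) by (subst W, subst card_Un_disjoint) auto
  then show ?thesis
    using gsign by (simp add: insert_sign_def minus_one_power_iff)
qed

lemma gmult_Lspace_left:
  assumes "v \<in> Lspace" "finite U"
  shows "gmult v y U = (\<Sum>u\<in>U. v {u} * insert_sign u (U - {u}) * y (U - {u}))"
proof -
  have "gmult v y U = (\<Sum>S\<in>Pow U. gsign S (U - S) * v S * y (U - S))"
    using assms by (simp add: gmult_def)
  also have "\<dots> = (\<Sum>S\<in>(\<lambda>u. {u}) ` U. gsign S (U - S) * v S * y (U - S))"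
  proof (rule sum.mono_neutral_right)
    show "\<forall>S\<in>Pow U - (\<lambda>u. {u}) ` U. gsign S (U - S) * v S * y (U - S) = 0"
      using Lspace_singleton[OF assms(1)] by fastforce
  qed (use assms in auto)
  also have "\<dots> = (\<Sum>u\<in>U. gsign {u} (U - {u}) * v {u} * y (U - {u}))"
    by (subst sum.reindex) (auto simp: inj_on_def)
  also have "\<dots> = (\<Sum>u\<in>U. v {u} * insert_sign u (U - {u}) * y (U - {u}))"
    using assms by (intro sum.cong) (auto simp: gsign_singleton_left)
  finally show ?thesis .
qed

lemma gmult_Lspace_right:
  assumes "v \<in> Lspace" "finite U"
  shows "gmult y v U = (\<Sum>u\<in>U. gsign (U - {u}) {u} * y (U - {u}) * v {u})"
proof -
  have "gmult y v U = (\<Sum>S\<in>Pow U. gsign S (U - S) * y S * v (U - S))"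
    using assms by (simp add: gmult_def)
  also have "\<dots> = (\<Sum>S\<in>(\<lambda>u. U - {u}) ` U. gsign S (U - S) * y S * v (U - S))"
  proof (rule sum.mono_neutral_right)
    show "\<forall>S\<in>Pow U - (\<lambda>u. U - {u}) ` U. gsign S (U - S) * y S * v (U - S) = 0"
    proof (rule ballI, rule ccontr)
      fix S
      assume S: "S \<in> Pow U - (\<lambda>u. U - {u}) ` U" and "gsign S (U - S) * y S * v (U - S) \<noteq> 0"
      then obtain x where x: "U - S = {x}"
        using Lspace_singleton[OF assms(1)] by fastforce
      then have "S = U - {x}" "x \<in> U"
        using S by auto
      then show False
        using S by auto
    qed
  qed (use assms in auto)
  also have "\<dots> = (\<Sum>u\<in>U. gsign (U - {u}) (U - (U - {u})) * y (U - {u}) * v (U - (U - {u})))"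
    by (subst sum.reindex) (auto simp: inj_on_def)
  also have "\<dots> = (\<Sum>u\<in>U. gsign (U - {u}) {u} * y (U - {u}) * v {u})"
    by (intro sum.cong) (auto simp: Diff_Diff_Int Int_absorb1)
  finally show ?thesis .
qed

definition homogeneous :: "nat \<Rightarrow> 'a::field grass \<Rightarrow> bool" where
  "homogeneous d x \<longleftrightarrow> (\<forall>U. x U \<noteq> 0 \<longrightarrow> card U = d)"

definition vanishes_below :: "nat \<Rightarrow> 'a::field grass \<Rightarrow> bool" where
  "vanishes_below d x \<longleftrightarrow> (\<forall>U. x U \<noteq> 0 \<longrightarrow> d \<le> card U)"

lemma homogeneous_gmult:
  assumes "homogeneous a x" "homogeneous b y"
  shows "homogeneous (a + b) (gmult x y)"
  unfolding homogeneous_def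
proof (intro allI impI)
  fix U
  assume "gmult x y U \<noteq> 0"
  then obtain S where "finite U" "S \<subseteq> U" "x S \<noteq> 0" "y (U - S) \<noteq> 0"
    using gmult_nonzero_split by blast
  moreover have "card S = a" "card (U - S) = b"
    using assms \<open>x S \<noteq> 0\<close> \<open>y (U - S) \<noteq> 0\<close> by (auto simp: homogeneous_def)
  ultimately show "card U = a + b"
    by (metis card_Diff_subset card_mono finite_subset le_add_diff_inverse)
qed

lemma vanishes_below_gmult:
  assumes "vanishes_below a x" "vanishes_below b y"
  shows "vanishes_below (a + b) (gmult x y)"
  unfolding vanishes_below_def
proof (intro allI impI)
  fix U
  assume "gmult x y U \<noteq> 0"
  then obtain S where "finite U" "S \<subseteq> U" "x S \<noteq> 0" "y (U - S) \<noteq> 0"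
    using gmult_nonzero_split by blast
  moreover have "a \<le> card S" "b \<le> card (U - S)"
    using assms \<open>x S \<noteq> 0\<close> \<open>y (U - S) \<noteq> 0\<close> by (auto simp: vanishes_below_def)
  ultimately show "a + b \<le> card U"
    by (metis add_le_mono card_Diff_subset card_mono finite_subset le_add_diff_inverse)
qed

lemma homogeneous_imp_vanishes_below: "homogeneous d x \<Longrightarrow> vanishes_below d x"
  by (simp add: homogeneous_def vanishes_below_def)

lemma vanishes_below_mono: "vanishes_below a x \<Longrightarrow> b \<le> a \<Longrightarrow> vanishes_below b x"
  by (auto simp: vanishes_below_def)

lemma vanishes_below_add:
  "vanishes_below d x \<Longrightarrow> vanishes_below d y \<Longrightarrow> vanishes_below d (x + y)"
  unfolding vanishes_below_def by (metis add.right_neutral plus_fun_apply)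

lemma vanishes_below_uminus: "vanishes_below d x \<Longrightarrow> vanishes_below d (- x)"
  by (auto simp: vanishes_below_def)

lemma vanishes_below_gsmult: "vanishes_below d x \<Longrightarrow> vanishes_below d (gsmult c x)"
  by (auto simp: vanishes_below_def gsmult_def)

lemma homogeneous_Lspace: "v \<in> Lspace \<Longrightarrow> homogeneous 1 v"
  by (auto simp: homogeneous_def Lspace_def)

lemma homogeneous_gone: "homogeneous 0 gone"
  by (auto simp: homogeneous_def gone_def)

lemma gmult_Lspace_Lspace_apply:
  assumes v: "v \<in> Lspace" and w: "w \<in> Lspace" and U: "finite U"
  shows "gmult v (gmult w x) U = (\<Sum>u\<in>U. \<Sum>u'\<in>{u'\<in>U. u' \<noteq> u}. v {u} * w {u'} *
    (insert_sign u (U - {u}) * insert_sign u' (U - {u} - {u'})) * x (U - {u} - {u'}))"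
  using U by (simp add: gmult_Lspace_left[OF v] gmult_Lspace_left[OF w] sum_distrib_left set_diff_eq
      algebra_simps conj_commute)

lemma gmult_Lspace_left_anticommute:
  assumes v: "v \<in> Lspace" and w: "w \<in> Lspace"
  shows "gmult v (gmult w x) = - gmult w (gmult v x)"
proof
  fix U
  show "gmult v (gmult w x) U = (- gmult w (gmult v x)) U"
  proof (cases "finite U")
    case False
    then show ?thesis
      by (simp add: gmult_def)
  next
    case True
    define G where "G u u' = w {u} * v {u'} *
      (insert_sign u (U - {u}) * insert_sign u' (U - {u} - {u'})) * x (U - {u} - {u'})" for u u'
    have "gmult v (gmult w x) U = (\<Sum>u\<in>U. \<Sum>u'\<in>{u'\<in>U. u' \<noteq> u}. - G u' u)"
    proof (rule trans[OF gmult_Lspace_Lspace_apply[OF v w True]], intro sum.cong refl)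
      fix u u'
      assume "u \<in> U" "u' \<in> {u'\<in>U. u' \<noteq> u}"
      moreover define W where "W = U - {u} - {u'}"
      ultimately have "U - {u} = insert u' W" "U - {u'} = insert u W" "U - {u'} - {u} = W"
        "finite W" "u \<notin> W" "u' \<notin> W" "u \<noteq> u'"
        using True by auto
      then show "v {u} * w {u'} * (insert_sign u (U - {u}) * insert_sign u' (U - {u} - {u'}))
          * x (U - {u} - {u'}) = - G u' u"
        unfolding G_def W_def[symmetric] by (cases "u < u'") (auto simp: insert_sign_insert)
    qed
    also have "\<dots> = - (\<Sum>u\<in>U. \<Sum>u'\<in>{u'\<in>U. u' \<noteq> u}. G u' u)"
      by (simp add: sum_negf)
    also have "(\<Sum>u\<in>U. \<Sum>u'\<in>{u'\<in>U. u' \<noteq> u}. G u' u) = (\<Sum>u'\<in>U. \<Sum>u\<in>{u\<in>U. u' \<noteq> u}. G u' u)"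
      by (rule sum.swap_restrict[OF True True])
    also have "\<dots> = gmult w (gmult v x) U"
      by (simp add: gmult_Lspace_Lspace_apply[OF w v True] G_def eq_commute)
    finally show ?thesis
      by simp
  qed
qed

lemma gmult_Lspace_anticommute:
  assumes "v \<in> Lspace" "w \<in> Lspace"
  shows "gmult v w = - gmult w v"
proof -
  have "v \<in> Grass" "w \<in> Grass"
    using assms Lspace_subset_Grass by blast+
  then show ?thesis
    using gmult_Lspace_left_anticommute[OF assms, of gone] by (simp add: gmult_gone_right)
qed

lemma gmult_Lspace_self:
  assumes "v \<in> Lspace"
  shows "gmult v (gmult v x) = (0 :: 'a::field_char_0 grass)"
proof
  fix U
  have "gmult v (gmult v x) U = - gmult v (gmult v x) U"
    using gmult_Lspace_left_anticommute[OF assms assms, of x] by (metis uminus_apply)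
  then show "gmult v (gmult v x) U = 0 U"
    by simp
qed

lemma gmult_commute_Lspace:
  assumes "homogeneous l y" "v \<in> Lspace"
  shows "gmult y v = gsmult ((-1) ^ l) (gmult v y)"
proof
  fix U
  show "gmult y v U = gsmult ((-1) ^ l) (gmult v y) U"
  proof (cases "finite U")
    case False
    then show ?thesis
      by (simp add: gmult_def gsmult_def)
  next
    case True
    have "gmult y v U = (\<Sum>u\<in>U. gsign (U - {u}) {u} * y (U - {u}) * v {u})"
      using gmult_Lspace_right[OF assms(2) True] .
    also have "\<dots> = (\<Sum>u\<in>U. (-1) ^ l * (v {u} * insert_sign u (U - {u}) * y (U - {u})))"
    proof (rule sum.cong)
      fix u
      assume u: "u \<in> U"
      show "gsign (U - {u}) {u} * y (U - {u}) * v {u} =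
          (-1) ^ l * (v {u} * insert_sign u (U - {u}) * y (U - {u}))"
      proof (cases "y (U - {u}) = 0")
        case False
        then have "card (U - {u}) = l"
          using assms(1) by (simp add: homogeneous_def)
        then have "gsign (U - {u}) {u} = (-1) ^ l * (insert_sign u (U - {u}) :: 'a)"
          using gsign_singleton_right[of "U - {u}" u] True by simp
        then show ?thesis
          by (simp add: algebra_simps)
      qed simp
    qed simp
    also have "\<dots> = gsmult ((-1) ^ l) (gmult v y) U"
      by (simp add: gsmult_def gmult_Lspace_left[OF assms(2) True] sum_distrib_left)
    finally show ?thesis .
  qed
qed

subsection \<open>Contraction and dual forms\<close>

text \<open>Contraction with the coordinate form dual to \<open>\<epsilon>\<^sub>k\<close>.\<close>

definition coord_contract :: "nat \<Rightarrow> 'a::field grass \<Rightarrow> 'a grass" where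
  "coord_contract k y = (\<lambda>U. if finite U \<and> k \<notin> U then insert_sign k U * y (insert k U) else 0)"

lemma gmult_Lspace_coord_contract_mem:
  assumes v: "v \<in> Lspace" and U: "finite U" "k \<in> U"
  shows "gmult v (coord_contract k y) U = v {k} * y U"
proof -
  define D where "D u = v {u} * insert_sign u (U - {u}) * coord_contract k y (U - {u})" for u
  have "gmult v (coord_contract k y) U = D k + (\<Sum>u\<in>U - {k}. D u)"
    using U by (simp add: gmult_Lspace_left[OF v] D_def sum.remove)
  also have "(\<Sum>u\<in>U - {k}. D u) = 0"
    using U by (intro sum.neutral) (auto simp: D_def coord_contract_def)
  also have "D k = v {k} * y U"
    using U by (simp add: D_def coord_contract_def insert_absorb mult.assoc insert_sign_square)
  finally show ?thesis
    by simp
qed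

lemma gmult_Lspace_coord_contract_nonmem:
  assumes v: "v \<in> Lspace" and U: "finite U" "k \<notin> U"
  shows "insert_sign k U * gmult v y (insert k U) = v {k} * y U - gmult v (coord_contract k y) U"
proof -
  define Y where "Y u = v {u} * y (insert k (U - {u}))" for u
  have sign: "insert_sign k U * insert_sign u (insert k (U - {u}))
      = - (insert_sign k (U - {u}) * (insert_sign u (U - {u}) :: 'a))" if "u \<in> U" for u
  proof -
    define W where "W = U - {u}"
    have "U = insert u W" "finite W" "u \<notin> W" "k \<notin> W" "k \<noteq> u"
      using that U by (auto simp: W_def)
    then have "insert_sign k U * insert_sign u (insert k W) = - (insert_sign k W * (insert_sign u W :: 'a))"
      by (cases "k < u") (auto simp: insert_sign_insert)
    then show ?thesis
      by (simp only: W_def)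
  qed
  have "gmult v y (insert k U) = v {k} * insert_sign k U * y U
      + (\<Sum>u\<in>U. insert_sign u (insert k (U - {u})) * Y u)"
    using U by (simp add: gmult_Lspace_left[OF v] insert_Diff_if Y_def mult_ac)
      (intro sum.cong, auto)
  then have "insert_sign k U * gmult v y (insert k U) = (insert_sign k U * insert_sign k U) * (v {k} * y U)
      + (\<Sum>u\<in>U. (insert_sign k U * insert_sign u (insert k (U - {u}))) * Y u)"
    by (simp add: distrib_left sum_distrib_left mult_ac)
  also have "\<dots> = v {k} * y U - (\<Sum>u\<in>U. insert_sign k (U - {u}) * insert_sign u (U - {u}) * Y u)"
    using sign by (simp add: insert_sign_square sum_negf cong: sum.cong)
  also have "(\<Sum>u\<in>U. insert_sign k (U - {u}) * insert_sign u (U - {u}) * Y u)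
      = gmult v (coord_contract k y) U"
    using U by (simp add: gmult_Lspace_left[OF v] coord_contract_def Y_def mult_ac)
  finally show ?thesis .
qed

lemma coord_contract_gmult_Lspace:
  assumes v: "v \<in> Lspace" and y: "y \<in> Grass"
  shows "coord_contract k (gmult v y) = gsmult (v {k}) y - gmult v (coord_contract k y)"
proof
  fix U
  show "coord_contract k (gmult v y) U = (gsmult (v {k}) y - gmult v (coord_contract k y)) U"
  proof (cases "finite U")
    case False
    then show ?thesis
      using Grass_finite_support[OF y] by (auto simp: coord_contract_def gmult_def gsmult_def)
  next
    case True
    then show ?thesis
      using gmult_Lspace_coord_contract_mem[OF v True] gmult_Lspace_coord_contract_nonmem[OF v True]
      by (cases "k \<in> U") (simp_all add: coord_contract_def gsmult_def)
  qed
qed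

definition contract :: "(nat \<Rightarrow> 'a::field) \<Rightarrow> nat set \<Rightarrow> 'a grass \<Rightarrow> 'a grass" where
  "contract f K y = (\<Sum>k\<in>K. gsmult (f k) (coord_contract k y))"

lemma gmult_sum_right: "gmult x (\<Sum>k\<in>K. g k) = (\<Sum>k\<in>K. gmult x (g k))"
proof (induction K rule: infinite_finite_induct)
  case (infinite K)
  then show ?case
    by (metis sum.infinite gmult_zero_right)
next
  case empty
  then show ?case
    by (simp only: sum.empty gmult_zero_right)
next
  case (insert k K)
  then show ?case
    by (metis sum.insert gmult_add_right)
qed

lemma contract_zero: "contract f K 0 = 0"
proof -
  have "gsmult (f k) (coord_contract k 0) = 0" for k
    by (simp add: gsmult_def coord_contract_def fun_eq_iff)
  then show ?thesis
    by (simp add: contract_def)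
qed

lemma contract_gone: "contract f K gone = 0"
proof -
  have "gsmult (f k) (coord_contract k gone) = 0" for k
    by (simp add: gsmult_def coord_contract_def gone_def fun_eq_iff)
  then show ?thesis
    by (simp add: contract_def)
qed

lemma contract_gmult_Lspace:
  assumes "v \<in> Lspace" "y \<in> Grass"
  shows "contract f K (gmult v y) = gsmult (\<Sum>k\<in>K. f k * v {k}) y - gmult v (contract f K y)"
proof
  fix U
  have "contract f K (gmult v y) U = (\<Sum>k\<in>K. f k * (v {k} * y U - gmult v (coord_contract k y) U))"
    by (simp add: contract_def sum_fun_apply gsmult_def coord_contract_gmult_Lspace[OF assms])
  moreover have "gmult v (contract f K y) U = (\<Sum>k\<in>K. f k * gmult v (coord_contract k y) U)"
    by (simp only: contract_def gmult_sum_right gmult_gsmult_right sum_fun_apply gsmult_apply)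
  ultimately show "contract f K (gmult v y) U = (gsmult (\<Sum>k\<in>K. f k * v {k}) y - gmult v (contract f K y)) U"
    by (simp add: gsmult_def sum_distrib_left sum_subtractf right_diff_distrib mult_ac)
qed

definition eps :: "nat \<Rightarrow> 'a::field grass" where
  "eps k = (\<lambda>U. if U = {k} then 1 else 0)"

lemma eps_in_Lspace: "eps k \<in> Lspace"
proof -
  have "{U. eps k U \<noteq> (0::'a)} = {{k}}"
    by (auto simp: eps_def)
  then show ?thesis
    by (auto simp: Lspace_def Grass_def eps_def)
qed

lemma Lspace_finite_coords:
  assumes "v \<in> Lspace"
  shows "finite {k. v {k} \<noteq> 0}"
proof -
  have "finite {U. v U \<noteq> 0}"
    using assms by (auto simp: Lspace_def Grass_def)
  then have "finite ((\<lambda>k. {k}) -` {U. v U \<noteq> 0})"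
    by (rule finite_vimageI) (auto simp: inj_on_def)
  then show ?thesis
    by (simp add: vimage_def)
qed

lemma Lspace_eq_sum_eps:
  assumes v: "v \<in> Lspace" and K: "finite K" "\<forall>k. v {k} \<noteq> 0 \<longrightarrow> k \<in> K"
  shows "v U = (\<Sum>k\<in>K. v {k} * eps k U)"
proof (cases "\<exists>k. U = {k}")
  case True
  then obtain k0 where U: "U = {k0}"
    by blast
  have "(\<Sum>k\<in>K. v {k} * eps k U) = (\<Sum>k\<in>K. if k = k0 then v {k0} else 0)"
    by (intro sum.cong) (auto simp: eps_def U)
  then show ?thesis
    using K U by (auto simp: sum.delta')
next
  case False
  then show ?thesis
    using Lspace_singleton[OF v] by (auto simp: eps_def intro!: sum.neutral)
qed

lemma gindependent_coeffs_eq: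
  assumes S: "gindependent S" and t: "finite t" "t \<subseteq> S" "v \<in> t"
    and eq: "(\<Sum>a\<in>t. gsmult (r a) a) = (\<Sum>a\<in>t. gsmult (s a) a)"
  shows "r v = s v"
proof -
  have "(\<Sum>a\<in>t. gsmult (r a - s a) a) = 0"
  proof
    fix U
    have "(\<Sum>a\<in>t. gsmult (r a) a) U = (\<Sum>a\<in>t. gsmult (s a) a) U"
      using eq by simp
    then show "(\<Sum>a\<in>t. gsmult (r a - s a) a) U = 0 U"
      by (simp add: sum_fun_apply gsmult_apply left_diff_distrib sum_subtractf)
  qed
  then have "r v - s v = 0"
    using S t unfolding gindependent_def by (elim allE[of _ t] allE[of _ "\<lambda>a. r a - s a"]) blast
  then show ?thesis
    by simp
qed

lemma gspan_common_support:
  assumes K: "finite K" and x: "\<And>k. k \<in> K \<Longrightarrow> x k \<in> gspan B" and S: "finite S" "S \<subseteq> B"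
  obtains T r where "finite T" "S \<subseteq> T" "T \<subseteq> B" "\<And>k U. k \<in> K \<Longrightarrow> x k U = (\<Sum>a\<in>T. r k a * a U)"
proof -
  have "\<forall>k. \<exists>t R. k \<in> K \<longrightarrow> finite t \<and> t \<subseteq> B \<and> x k = (\<Sum>a\<in>t. gsmult (R a) a)"
    using x unfolding gspan_def by blast
  then obtain t where "\<forall>k. \<exists>R. k \<in> K \<longrightarrow> finite (t k) \<and> t k \<subseteq> B \<and> x k = (\<Sum>a\<in>t k. gsmult (R a) a)"
    by (rule choice[THEN exE])
  then obtain R where tR: "\<And>k. k \<in> K \<Longrightarrow> finite (t k) \<and> t k \<subseteq> B \<and> x k = (\<Sum>a\<in>t k. gsmult (R k a) a)"
    by (metis choice)
  define T where "T = S \<union> (\<Union>k\<in>K. t k)"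
  show thesis
  proof (rule that[of T "\<lambda>k a. if a \<in> t k then R k a else 0"])
    show "finite T" "S \<subseteq> T" "T \<subseteq> B"
      using K S tR by (auto simp: T_def)
    show "x k U = (\<Sum>a\<in>T. (if a \<in> t k then R k a else 0) * a U)" if k: "k \<in> K" for k U
    proof -
      have "x k U = (\<Sum>a\<in>t k. R k a * a U)"
        using tR[OF k] by (simp add: sum_fun_apply gsmult_apply)
      also have "\<dots> = (\<Sum>a\<in>T. (if a \<in> t k then R k a else 0) * a U)"
        by (rule sum.mono_neutral_cong_left) (use K S tR k in \<open>auto simp: T_def\<close>)
      finally show ?thesis .
    qed
  qed
qed

lemma basis_dual_form:
  assumes B: "is_basis_seq_L e" and J: "finite J" "n \<in> J"
  obtains K f where "\<forall>j\<in>J. (\<Sum>k\<in>K. f k * e j {k}) = (if j = n then 1 else (0::'a::field))"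
proof -
  have eL: "e j \<in> Lspace" for j
    using B by (auto simp: is_basis_seq_L_def is_basis_L_def)
  have indep: "gindependent (range e)" and span: "gspan (range e) = Lspace" and "inj e"
    using B by (auto simp: is_basis_seq_L_def is_basis_L_def)
  define K where "K = (\<Union>j\<in>J. {k. e j {k} \<noteq> 0})"
  have K: "finite K" "\<And>j k. j \<in> J \<Longrightarrow> e j {k} \<noteq> 0 \<Longrightarrow> k \<in> K"
    using J Lspace_finite_coords[OF eL] by (auto simp: K_def)
  have eps_span: "eps k \<in> gspan (range e)" for k
    using eps_in_Lspace span by simp
  obtain T r where T: "finite T" "e ` J \<subseteq> T" "T \<subseteq> range e"
    and eps: "\<And>k U. k \<in> K \<Longrightarrow> eps k U = (\<Sum>a\<in>T. r k a * a U)"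
    by (rule gspan_common_support[where x = eps, OF K(1) eps_span finite_imageI[OF J(1)] image_mono[OF subset_UNIV]]) blast
  have coords: "(\<Sum>k\<in>K. e j {k} * r k a) = (if a = e j then 1 else 0)" if j: "j \<in> J" and "a \<in> T" for j a
  proof (rule gindependent_coeffs_eq[OF indep T(1,3) \<open>a \<in> T\<close>])
    have lhs: "(\<Sum>a\<in>T. gsmult (\<Sum>k\<in>K. e j {k} * r k a) a) U = e j U" for U
    proof -
      have "(\<Sum>a\<in>T. gsmult (\<Sum>k\<in>K. e j {k} * r k a) a) U = (\<Sum>a\<in>T. \<Sum>k\<in>K. e j {k} * (r k a * a U))"
        by (simp add: sum_fun_apply gsmult_apply sum_distrib_right mult.assoc)
      also have "\<dots> = (\<Sum>k\<in>K. e j {k} * eps k U)"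
        by (subst sum.swap) (simp add: eps sum_distrib_left)
      also have "\<dots> = e j U"
        by (rule Lspace_eq_sum_eps[OF eL K(1), symmetric]) (use K(2) j in blast)
      finally show ?thesis .
    qed
    have "(\<Sum>a\<in>T. gsmult (if a = e j then 1 else 0) a) = (\<Sum>a\<in>T. if a = e j then e j else 0)"
      by (intro sum.cong) (auto simp: gsmult_def fun_eq_iff)
    also have "\<dots> = e j"
      using T j by auto
    finally show "(\<Sum>a\<in>T. gsmult (\<Sum>k\<in>K. e j {k} * r k a) a) = (\<Sum>a\<in>T. gsmult (if a = e j then 1 else 0) a)"
      using lhs by (simp add: fun_eq_iff)
  qed
  show thesis
  proof (rule that)
    show "\<forall>j\<in>J. (\<Sum>k\<in>K. r k (e n) * e j {k}) = (if j = n then 1 else 0)"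
      using coords T(2) J \<open>inj e\<close> by (auto simp: mult.commute inj_eq)
  qed
qed

subsection \<open>Monomials in a basis\<close>

definition gmonomial :: "(nat \<Rightarrow> 'a::field grass) \<Rightarrow> nat list \<Rightarrow> 'a grass" where
  "gmonomial e is = foldr gmult (map e is) gone"

lemma gmonomial_Nil [simp]: "gmonomial e [] = gone"
  by (simp add: gmonomial_def)

lemma gmonomial_Cons [simp]: "gmonomial e (i # is) = gmult (e i) (gmonomial e is)"
  by (simp add: gmonomial_def)

lemma gmonomial_in_Grass: "(\<And>j. e j \<in> Lspace) \<Longrightarrow> gmonomial e is \<in> Grass"
  by (induction "is") (auto intro: Grass_gmult gone_in_Grass Lspace_subset_Grass[THEN subsetD])

lemma homogeneous_gmonomial:
  "(\<And>j. e j \<in> Lspace) \<Longrightarrow> homogeneous (length is) (gmonomial e is)"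
proof (induction "is")
  case (Cons i "is")
  then show ?case
    using homogeneous_gmult[OF homogeneous_Lspace, of "e i" "length is"] by simp
qed (simp add: homogeneous_gone)

lemma gmult_gmonomial_eq_0:
  fixes e :: "nat \<Rightarrow> 'a::field_char_0 grass"
  assumes eL: "\<And>j. e j \<in> Lspace" and "m \<in> set is"
  shows "gmult (e m) (gmonomial e is) = 0"
  using assms(2)
proof (induction "is")
  case Nil
  then show ?case
    by simp
next
  case (Cons i "is")
  show ?case
  proof (cases "i = m")
    case True
    then show ?thesis
      using gmult_Lspace_self[OF eL] by simp
  next
    case False
    then have "m \<in> set is"
      using Cons.prems by simp
    then have "gmult (e m) (gmonomial e is) = 0"
      by (rule Cons.IH)
    then show ?thesis
      using gmult_Lspace_left_anticommute[OF eL eL, of m i] by (simp add: gmult_zero_right)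
  qed
qed

lemma contract_gmonomial:
  assumes "\<And>j. e j \<in> Lspace" "\<forall>j\<in>set is. (\<Sum>k\<in>K. f k * e j {k}) = 0"
  shows "contract f K (gmonomial e is) = 0"
  using assms(2)
proof (induction "is")
  case Nil
  then show ?case
    by (simp add: contract_gone)
next
  case (Cons i "is")
  then have "contract f K (gmonomial e is) = 0" "(\<Sum>k\<in>K. f k * e i {k}) = 0"
    by (simp_all add: fun_eq_iff)
  then show ?case
    by (simp add: contract_gmult_Lspace[OF assms(1) gmonomial_in_Grass[OF assms(1)]]
        gmult_zero_right gsmult_zero_left)
qed

lemma gmult_basis_gmonomial_neq_0:
  assumes B: "is_basis_seq_L e" and "j \<notin> set js" and nonzero: "gmonomial e js \<noteq> 0"
  shows "gmult (e j) (gmonomial e js) \<noteq> 0"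
proof
  assume zero: "gmult (e j) (gmonomial e js) = 0"
  have eL: "\<And>i. e i \<in> Lspace"
    using B by (auto simp: is_basis_seq_L_def is_basis_L_def)
  obtain K f where f: "\<forall>i\<in>insert j (set js). (\<Sum>k\<in>K. f k * e i {k}) = (if i = j then 1 else 0)"
    using basis_dual_form[OF B, of "insert j (set js)" j] by blast
  have "contract f K (gmonomial e js) = 0"
    using f \<open>j \<notin> set js\<close> by (intro contract_gmonomial[OF eL]) auto
  then have "contract f K (gmult (e j) (gmonomial e js)) = gmonomial e js"
    using f by (simp add: contract_gmult_Lspace[OF eL gmonomial_in_Grass[OF eL]]
        gmult_zero_right gsmult_one)
  then show False
    using zero nonzero by (simp add: contract_zero)
qed

lemma gmonomial_eq_0_iff:
  assumes B: "is_basis_seq_L e"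
  shows "gmonomial e js = (0 :: 'a::field_char_0 grass) \<longleftrightarrow> \<not> distinct js"
proof (induction js)
  case Nil
  show ?case
    by (auto simp: gone_def fun_eq_iff)
next
  case (Cons j js)
  have eL: "\<And>i. e i \<in> Lspace"
    using B by (auto simp: is_basis_seq_L_def is_basis_L_def)
  consider "j \<in> set js" | "j \<notin> set js" "\<not> distinct js" | "distinct (j # js)"
    by auto
  then show ?case
  proof cases
    case 1
    then show ?thesis
      using gmult_gmonomial_eq_0[of e, OF eL 1] by (simp add: fun_eq_iff)
  next
    case 2
    then have "gmonomial e js = 0"
      using Cons.IH by (simp add: fun_eq_iff)
    then show ?thesis
      using 2 by (simp add: gmult_zero_right)
  next
    case 3
    then have "gmonomial e js \<noteq> 0"
      using Cons.IH by (simp add: fun_eq_iff)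
    then have "gmult (e j) (gmonomial e js) \<noteq> 0"
      using gmult_basis_gmonomial_neq_0[OF B] 3 by simp
    then show ?thesis
      using 3 by (simp add: fun_eq_iff)
  qed
qed

lemma gmult_basis_gmonomial_eq_0_iff:
  assumes "is_basis_seq_L e" "distinct js"
  shows "gmult (e k) (gmonomial e js) = (0 :: 'a::field_char_0 grass) \<longleftrightarrow> k \<in> set js"
  using gmonomial_eq_0_iff[OF assms(1), of "k # js"] assms(2) by simp

subsection \<open>Automorphisms perturbing a basis\<close>

lemma grass_aut_add: "grass_aut \<phi> \<Longrightarrow> x \<in> Grass \<Longrightarrow> y \<in> Grass \<Longrightarrow> \<phi> (x + y) = \<phi> x + \<phi> y"
  and grass_aut_gsmult: "grass_aut \<phi> \<Longrightarrow> x \<in> Grass \<Longrightarrow> \<phi> (gsmult c x) = gsmult c (\<phi> x)"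
  and grass_aut_gmult: "grass_aut \<phi> \<Longrightarrow> x \<in> Grass \<Longrightarrow> y \<in> Grass \<Longrightarrow> \<phi> (gmult x y) = gmult (\<phi> x) (\<phi> y)"
  and grass_aut_gone: "grass_aut \<phi> \<Longrightarrow> \<phi> gone = gone"
  by (simp_all add: grass_aut_def)

lemma grass_aut_uminus:
  assumes aut: "grass_aut \<phi>" and x: "x \<in> Grass"
  shows "\<phi> (- x) = - \<phi> x"
proof -
  have "\<phi> (gsmult (-1) x) = gsmult (-1) (\<phi> x)"
    by (rule grass_aut_gsmult[OF aut x])
  then show ?thesis
    by (simp add: gsmult_def fun_Compl_def)
qed

lemma grass_aut_gmonomial:
  assumes aut: "grass_aut \<phi>" and eL: "\<And>j. e j \<in> Lspace"
  shows "\<phi> (gmonomial e is) = gmonomial (\<lambda>j. \<phi> (e j)) is"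
proof (induction "is")
  case Nil
  then show ?case
    using grass_aut_gone[OF aut] by simp
next
  case (Cons i "is")
  then show ?case
    using grass_aut_gmult[OF aut Lspace_subset_Grass[THEN subsetD, OF eL] gmonomial_in_Grass[OF eL]]
    by simp
qed

lemma type4_basis_seq_not_fixed:
  assumes "type4 \<phi>" "is_basis_seq_L e"
  shows "\<phi> (e k) \<noteq> e k"
  using assms by (auto simp: type4_def is_basis_seq_L_def)

lemma involution_fixes_perturbation:
  assumes aut: "grass_aut \<phi>" and inv: "involutive_on_E \<phi>"
    and v: "v \<in> Grass" and b: "b \<in> Grass" and "c \<noteq> 0"
    and \<phi>v: "\<phi> v = - v + gsmult c b"
  shows "\<phi> b = b"
proof
  fix U
  have "v = \<phi> (\<phi> v)"
    using inv v by (simp add: involutive_on_E_def)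
  also have "\<dots> = \<phi> (- v + gsmult c b)"
    by (simp only: \<phi>v)
  also have "\<dots> = - \<phi> v + gsmult c (\<phi> b)"
    using grass_aut_add[OF aut Grass_uminus[OF v] Grass_gsmult[OF b]]
      grass_aut_uminus[OF aut v] grass_aut_gsmult[OF aut b] by simp
  finally have "v U = - \<phi> v U + c * \<phi> b U"
    by (simp add: gsmult_def fun_eq_iff)
  then show "\<phi> b U = b U"
    using \<open>c \<noteq> 0\<close> \<phi>v by (simp add: gsmult_def)
qed

lemma gmonomial_perturbed_generators:
  assumes eL: "\<And>j. e j \<in> Lspace" and y: "\<And>j. vanishes_below 2 (y j)"
  shows "\<exists>R. gmonomial (\<lambda>j. - e j + y j) is = gsmult ((-1) ^ length is) (gmonomial e is) + R
    \<and> vanishes_below (length is + 1) R"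
proof (induction "is")
  case Nil
  show ?case
    by (intro exI[of _ 0]) (simp add: gsmult_def vanishes_below_def)
next
  case (Cons i "is")
  then obtain R where R: "gmonomial (\<lambda>j. - e j + y j) is = gsmult ((-1) ^ length is) (gmonomial e is) + R"
    and R_deg: "vanishes_below (length is + 1) R"
    by blast
  define s :: 'a where "s = (-1) ^ length is"
  define M where "M = gmonomial e is"
  define R' where "R' = - gmult (e i) R + gsmult s (gmult (y i) M) + gmult (y i) R"
  have "gmonomial (\<lambda>j. - e j + y j) (i # is) = gmult (- e i + y i) (gsmult s M + R)"
    using R by (simp add: s_def M_def)
  also have "\<dots> = gsmult (- s) (gmult (e i) M) + R'"
    unfolding R'_def
    by (simp only: gmult_add_left gmult_add_right gmult_uminus_left gmult_gsmult_right)
      (simp add: gsmult_def fun_eq_iff algebra_simps)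
  finally have "gmonomial (\<lambda>j. - e j + y j) (i # is) = gsmult ((-1) ^ length (i # is)) (gmonomial e (i # is)) + R'"
    by (simp add: s_def M_def)
  moreover have "vanishes_below (length (i # is) + 1) R'"
  proof -
    have M_deg: "vanishes_below (length is) M"
      unfolding M_def by (rule homogeneous_imp_vanishes_below[OF homogeneous_gmonomial[OF eL]])
    have "vanishes_below (1 + (length is + 1)) (gmult (e i) R)"
      by (rule vanishes_below_gmult[OF homogeneous_imp_vanishes_below[OF homogeneous_Lspace[OF eL]] R_deg])
    moreover have "vanishes_below (2 + length is) (gmult (y i) M)"
      by (rule vanishes_below_gmult[OF y M_deg])
    moreover have "vanishes_below (2 + (length is + 1)) (gmult (y i) R)"
      by (rule vanishes_below_gmult[OF y R_deg])
    ultimately show ?thesis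
      unfolding R'_def
      by (intro vanishes_below_add vanishes_below_uminus vanishes_below_gsmult)
        (auto elim: vanishes_below_mono)
  qed
  ultimately show ?case
    by blast
qed

lemma gmonomial_fixed_even_length:
  fixes e :: "nat \<Rightarrow> 'a::field_char_0 grass"
  assumes aut: "grass_aut \<phi>" and eL: "\<And>j. e j \<in> Lspace"
    and y: "\<And>j. vanishes_below 2 (y j)" and \<phi>e: "\<And>j. \<phi> (e j) = - e j + y j"
    and fixed: "\<phi> (gmonomial e is) = gmonomial e is" and nonzero: "gmonomial e is \<noteq> 0"
  shows "even (length is)"
proof (rule ccontr)
  assume odd: "odd (length is)"
  obtain R where R: "gmonomial (\<lambda>j. - e j + y j) is = gsmult ((-1) ^ length is) (gmonomial e is) + R"
    and R_deg: "vanishes_below (length is + 1) R"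
    using gmonomial_perturbed_generators[of e y, OF eL y] by blast
  have "gmonomial e is = gsmult (-1) (gmonomial e is) + R"
    using fixed R odd by (simp add: grass_aut_gmonomial[OF aut eL] \<phi>e)
  then have eq: "2 * gmonomial e is U = R U" for U
    by (simp add: gsmult_def fun_eq_iff)
  have "gmonomial e is U = 0" for U
  proof (rule ccontr)
    assume "gmonomial e is U \<noteq> 0"
    moreover from this have "card U = length is"
      using homogeneous_gmonomial[OF eL] by (auto simp: homogeneous_def)
    then have "R U = 0"
      using R_deg by (auto simp: vanishes_below_def)
    ultimately show False
      using eq[of U] by simp
  qed
  then show False
    using nonzero by (simp add: fun_eq_iff)
qed

lemma gmult_perturbation_anticommutator:
  assumes v: "v \<in> Lspace" and w: "w \<in> Lspace"
    and commute: "gmult b' v = gmult v b'" "gmult b w = gmult w b"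
  shows "gmult (- v + gsmult c b) (- w + gsmult d b') U + gmult (- w + gsmult d b') (- v + gsmult c b) U
    = c * d * (gmult b b' U + gmult b' b U) - 2 * (d * gmult v b' U + c * gmult w b U)"
proof -
  have "gmult (- v + gsmult c b) (- w + gsmult d b') U
      = gmult v w U - d * gmult v b' U - c * gmult w b U + c * d * gmult b b' U"
    "gmult (- w + gsmult d b') (- v + gsmult c b) U
      = gmult w v U - c * gmult w b U - d * gmult v b' U + d * c * gmult b' b U"
    using commute
    by (simp_all only: gmult_add_left gmult_add_right gmult_uminus_left gmult_uminus_right
        gmult_gsmult_left gmult_gsmult_right) (simp_all add: gsmult_def algebra_simps)
  note expand = this
  show ?thesis
    unfolding expand using fun_cong[OF gmult_Lspace_anticommute[OF v w], of U]
    by (simp add: algebra_simps)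
qed

text \<open>The two sides of \<open>\<phi>(v w + w v) = 0\<close> are compared degree by degree: the terms linear
  in the perturbations have degree \<open>1 + l\<close> or \<open>1 + l'\<close>, the quadratic ones degree \<open>l + l'\<close>.\<close>

lemma perturbation_anticommutator:
  fixes \<phi> :: "'a::field_char_0 grass \<Rightarrow> 'a grass"
  assumes aut: "grass_aut \<phi>" and v: "v \<in> Lspace" and w: "w \<in> Lspace"
    and \<phi>v: "\<phi> v = - v + gsmult c b" and \<phi>w: "\<phi> w = - w + gsmult d b'"
    and b: "homogeneous l b" "even l" "2 \<le> l" and b': "homogeneous l' b'" "even l'" "2 \<le> l'"
  shows "gsmult d (gmult v b') + gsmult c (gmult w b) = 0"
proof
  fix U
  have vG: "v \<in> Grass" and wG: "w \<in> Grass"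
    using v w Lspace_subset_Grass by blast+
  have "gmult (\<phi> v) (\<phi> w) + gmult (\<phi> w) (\<phi> v) = 0"
    using gmult_Lspace_anticommute[OF v w] grass_aut_uminus[OF aut Grass_gmult[OF wG vG]]
    by (simp add: grass_aut_gmult[OF aut vG wG, symmetric] grass_aut_gmult[OF aut wG vG, symmetric])
  then have "gmult (\<phi> v) (\<phi> w) U + gmult (\<phi> w) (\<phi> v) U = 0"
    by (metis plus_fun_apply zero_fun_apply)
  moreover have "gmult b' v = gmult v b'" "gmult b w = gmult w b"
    using gmult_commute_Lspace[OF b(1) w] gmult_commute_Lspace[OF b'(1) v] b(2) b'(2)
    by (simp_all add: gsmult_def)
  ultimately have "c * d * (gmult b b' U + gmult b' b U) - 2 * (d * gmult v b' U + c * gmult w b U) = 0"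
    unfolding \<phi>v \<phi>w by (simp only: gmult_perturbation_anticommutator[OF v w])
  then have key: "2 * (d * gmult v b' U + c * gmult w b U) = c * d * (gmult b b' U + gmult b' b U)"
    by simp
  have hom: "homogeneous (1 + l') (gmult v b')" "homogeneous (1 + l) (gmult w b)"
    "homogeneous (l + l') (gmult b b')" "homogeneous (l' + l) (gmult b' b)"
    by (intro homogeneous_gmult homogeneous_Lspace v w b(1) b'(1))+
  show "(gsmult d (gmult v b') + gsmult c (gmult w b)) U = 0 U"
  proof (cases "card U = l + l'")
    case True
    then have "gmult v b' U = 0" "gmult w b U = 0"
      using hom(1,2) b(3) b'(3) by (auto simp: homogeneous_def)
    then show ?thesis
      by (simp add: gsmult_def)
  next
    case False
    then have "gmult b b' U = 0" "gmult b' b U = 0"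
      using hom(3,4) by (auto simp: homogeneous_def)
    then have "2 * (d * gmult v b' U + c * gmult w b U) = 0"
      using key by (simp only: add_0 mult_zero_right)
    then show ?thesis
      by (simp only: mult_eq_0_iff) (simp add: gsmult_def)
  qed
qed

lemma perturbation_index_absorbs:
  fixes e :: "nat \<Rightarrow> 'a::field_char_0 grass"
  assumes B: "is_basis_seq_L e" and c: "\<And>n. c n \<noteq> 0" and dist: "\<And>n. distinct (idx n)"
    and rel: "\<And>n m. gsmult (c m) (gmult (e n) (gmonomial e (idx m)))
      + gsmult (c n) (gmult (e m) (gmonomial e (idx n))) = 0"
    and k: "k \<in> set (idx n)" "k \<noteq> n" and m: "m \<notin> set (idx n)" "m \<noteq> n"
  shows "m \<in> set (idx k)"
proof -
  have eL: "\<And>j. e j \<in> Lspace"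
    using B by (auto simp: is_basis_seq_L_def is_basis_L_def)
  let ?M = "\<lambda>j. gmonomial e (idx j)"
  have idx_sym: "i \<in> set (idx j) \<longleftrightarrow> j \<in> set (idx i)" for i j
  proof -
    have "gmult (e i) (?M j) = 0 \<longleftrightarrow> gmult (e j) (?M i) = 0"
      by (rule gsmult_add_eq_0_zero_iff[OF rel c c])
    then show ?thesis
      by (simp add: gmult_basis_gmonomial_eq_0_iff[OF B dist])
  qed
  have "gmult (e k) (gmult (e m) (?M n)) = 0"
    using gmult_Lspace_left_anticommute[OF eL eL, of k m] gmult_gmonomial_eq_0[of e, OF eL k(1)]
    by (simp add: gmult_zero_right)
  moreover have "gsmult (c m) (gmult (e k) (gmult (e n) (?M m)))
      + gsmult (c n) (gmult (e k) (gmult (e m) (?M n))) = 0"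
    using rel[where n = n and m = m] by (metis gmult_add_right gmult_gsmult_right gmult_zero_right)
  ultimately have "gmonomial e (k # n # idx m) = 0"
    using c by (simp add: gsmult_zero_right gsmult_eq_0_iff)
  then have "\<not> distinct (k # n # idx m)"
    using gmonomial_eq_0_iff[OF B] by blast
  then have "k \<in> set (idx m)"
    using k m idx_sym dist by auto
  then show ?thesis
    using idx_sym by blast
qed

lemma type4_fixed_gmonomial_length:
  assumes t4: "type4 \<phi>" and B: "is_basis_seq_L e"
    and "is \<noteq> []" and fixed: "\<phi> (gmonomial e is) = gmonomial e is"
  shows "2 \<le> length is"
proof (rule ccontr)
  assume "\<not> 2 \<le> length is"
  then have "length is = 1"
    using \<open>is \<noteq> []\<close> by (auto simp: not_le less_2_cases_iff)
  then obtain k where "is = [k]"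
    by (auto simp: length_Suc_conv)
  moreover have "e k \<in> Grass"
    using B Lspace_subset_Grass by (auto simp: is_basis_seq_L_def is_basis_L_def)
  ultimately have "\<phi> (e k) = e k"
    using fixed by (simp add: gmult_gone_right)
  then show False
    using type4_basis_seq_not_fixed[OF t4 B] by blast
qed

lemma no_type4_involution_perturbing_by_monomials:
  fixes \<phi> :: "'a::field_char_0 grass \<Rightarrow> 'a grass"
  assumes aut: "grass_aut \<phi>" and inv: "involutive_on_E \<phi>" and t4: "type4 \<phi>"
    and B: "is_basis_seq_L e" and c: "\<And>n. c n \<noteq> 0"
    and idx: "\<And>n. idx n \<noteq> []" "\<And>n. distinct (idx n)"
    and \<phi>e: "\<And>n. \<phi> (e n) = - e n + gsmult (c n) (gmonomial e (idx n))"
  shows False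
proof -
  have eL: "\<And>j. e j \<in> Lspace"
    using B by (auto simp: is_basis_seq_L_def is_basis_L_def)
  let ?M = "\<lambda>n. gmonomial e (idx n)"
  have fixed: "\<phi> (?M n) = ?M n" for n
    using eL Lspace_subset_Grass
    by (intro involution_fixes_perturbation[OF aut inv _ gmonomial_in_Grass[OF eL] c \<phi>e]) auto
  have len: "2 \<le> length (idx n)" for n
    by (rule type4_fixed_gmonomial_length[OF t4 B idx(1) fixed])
  have even: "even (length (idx n))" for n
  proof (rule gmonomial_fixed_even_length[OF aut eL _ \<phi>e fixed])
    show "vanishes_below 2 (gsmult (c j) (?M j))" for j
      by (rule vanishes_below_gsmult[OF vanishes_below_mono[OF
            homogeneous_imp_vanishes_below[OF homogeneous_gmonomial[OF eL]] len]])
    show "?M n \<noteq> 0"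
      using gmonomial_eq_0_iff[OF B] idx(2) by blast
  qed
  have rel: "gsmult (c m) (gmult (e n) (?M m)) + gsmult (c n) (gmult (e m) (?M n)) = 0" for n m
    by (rule perturbation_anticommutator[OF aut eL eL \<phi>e \<phi>e homogeneous_gmonomial[OF eL]
          even len homogeneous_gmonomial[OF eL] even len])
  have "\<not> set (idx 0) \<subseteq> {0}"
    using len[of 0] distinct_card[OF idx(2)] card_mono[of "{0::nat}" "set (idx 0)"] by auto
  then obtain k where k: "k \<in> set (idx 0)" "k \<noteq> 0"
    by blast
  have "UNIV \<subseteq> insert 0 (set (idx 0)) \<union> set (idx k)"
    using perturbation_index_absorbs[OF B c idx(2) rel k] by blast
  then show False
    using finite_subset infinite_UNIV_nat by blast
qed

theorem mainTheorem11:
  shows "\<not> (\<exists>(\<phi> :: 'a::field_char_0 grass \<Rightarrow> 'a grass).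
            grass_aut \<phi> \<and> involutive_on_E \<phi> \<and> type4 \<phi> \<and>
            (\<exists>e. is_basis_seq_L e \<and>
                 (\<forall>n. \<exists>c b. c \<noteq> 0 \<and> monomial_in e b \<and> \<phi> (e n) = - e n + gsmult c b)))"
proof
  assume "\<exists>(\<phi> :: 'a::field_char_0 grass \<Rightarrow> 'a grass).
            grass_aut \<phi> \<and> involutive_on_E \<phi> \<and> type4 \<phi> \<and>
            (\<exists>e. is_basis_seq_L e \<and>
                 (\<forall>n. \<exists>c b. c \<noteq> 0 \<and> monomial_in e b \<and> \<phi> (e n) = - e n + gsmult c b))"
  then obtain \<phi> :: "'a grass \<Rightarrow> 'a grass" and e where aut: "grass_aut \<phi>" and inv: "involutive_on_E \<phi>"
    and t4: "type4 \<phi>" and B: "is_basis_seq_L e"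
    and H: "\<forall>n. \<exists>c b. c \<noteq> 0 \<and> monomial_in e b \<and> \<phi> (e n) = - e n + gsmult c b"
    by blast
  have "\<forall>n. \<exists>c is. c \<noteq> 0 \<and> is \<noteq> [] \<and> sorted_wrt (<) is \<and> \<phi> (e n) = - e n + gsmult c (gmonomial e is)"
    using H unfolding monomial_in_def gmonomial_def by blast
  then obtain c idx where "\<And>n. c n \<noteq> 0 \<and> idx n \<noteq> [] \<and> sorted_wrt (<) (idx n)
      \<and> \<phi> (e n) = - e n + gsmult (c n) (gmonomial e (idx n))"
    by metis
  then show False
    using no_type4_involution_perturbing_by_monomials[OF aut inv t4 B, of c idx]
    by (simp add: strict_sorted_iff)
qed

end
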